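(* For every finite nonempty $A\subseteq\mathbb{R}^n$ define $\delta(A)=\sqrt{\langle\langle \mathrm{conv}(A-A),\mathrm{conv}(A-A)\rangle\rangle_2}$, and set $\delta(\emptyset)=0$. Then $(\mathbb{R}^n,\delta)$ is a diversity.
   Context: $\langle\langle A,B\rangle\rangle_2=\int_{\mathbb{R}^n}h_A(x)h_B(x)\,d\phi(x)$ for convex bodies (closed, bounded, non-empty convex sets) $A,B\subseteq\mathbb{R}^n$, where $h_A(x)=\sup\{a\cdot x: a\in A\}$ is the support function and $\phi$ is the standard Gaussian probability measure on $\mathbb{R}^n$. $A-A=\{a_1-a_2: a_1,a_2\in A\}$ and $\mathrm{conv}$ denotes convex hull. A diversity $(X,\delta)$ is a set $X$ with a function $\delta$ on finite subsets of $X$ such that (D1) $\delta(A)\geq 0$, and $\delta(A)=0$ iff $|A|\leq 1$; (D2) for all finite $A,B,C\subseteq X$ with $B\neq\emptyset$, $\delta(A\cup B)+\delta(B\cup C)\geq\delta(A\cup C)$. *)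

theory Defs
  imports "HOL-Analysis.Analysis"
begin

definition std_gaussian :: "'a::euclidean_space measure" where
  "std_gaussian = density lborel
     (\<lambda>x. ennreal ((2 * pi) powr (- real DIM('a) / 2) * exp (- (norm x)\<^sup>2 / 2)))"

definition support_fun :: "'a::euclidean_space set \<Rightarrow> 'a \<Rightarrow> real" where
  "support_fun A x = Sup ((\<lambda>a. a \<bullet> x) ` A)"

definition gauss_ip :: "'a::euclidean_space set \<Rightarrow> 'a set \<Rightarrow> real" where
  "gauss_ip A B = (\<integral>x. support_fun A x * support_fun B x \<partial>std_gaussian)"

definition mdiff :: "'a::ab_group_add set \<Rightarrow> 'a set \<Rightarrow> 'a set" where
  "mdiff A B = {a - b | a b. a \<in> A \<and> b \<in> B}"

definition gauss_delta :: "'a::euclidean_space set \<Rightarrow> real" where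
  "gauss_delta A = (if A = {} then 0
     else sqrt (gauss_ip (convex hull (mdiff A A)) (convex hull (mdiff A A))))"

definition is_diversity :: "'a set \<Rightarrow> ('a set \<Rightarrow> real) \<Rightarrow> bool" where
  "is_diversity X \<delta> \<longleftrightarrow>
     (\<forall>A. finite A \<and> A \<subseteq> X \<longrightarrow> \<delta> A \<ge> 0 \<and> (\<delta> A = 0 \<longleftrightarrow> card A \<le> 1)) \<and>
     (\<forall>A B C. finite A \<and> finite B \<and> finite C \<and> A \<subseteq> X \<and> B \<subseteq> X \<and> C \<subseteq> X \<and> B \<noteq> {}
        \<longrightarrow> \<delta> (A \<union> B) + \<delta> (B \<union> C) \<ge> \<delta> (A \<union> C))"

end

theory Submission
  imports Defs "HOL-Probability.Distributions"
begin

(* For finite nonempty A the support function of conv (A - A) is the width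
   w_A(x) = max {(a - b) . x | a, b in A}, so delta A is the norm of w_A in L^2 of the
   Gaussian measure. Widths are nonnegative, and for any b in B the splitting
   p - q = (p - b) + (b - q) gives w_(A u C) <= w_(A u B) + w_(B u C) pointwise; Minkowski's
   inequality in L^2 turns this into axiom (D2). If a and b are distinct points of A then
   w_A(x) >= |(a - b) . x|, and the Gaussian integral of ((a - b) . x)^2 is positive because
   the density is positive and the integrand is continuous and not identically zero, which
   gives (D1). *)

lemma integrable_mult_of_integrable_squares:
  fixes f g :: "'a \<Rightarrow> real"
  assumes [measurable]: "f \<in> borel_measurable M" "g \<in> borel_measurable M"
    and "integrable M (\<lambda>x. (f x)\<^sup>2)" "integrable M (\<lambda>x. (g x)\<^sup>2)"
  shows "integrable M (\<lambda>x. f x * g x)"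
proof (rule Bochner_Integration.integrable_bound)
  show "integrable M (\<lambda>x. (f x)\<^sup>2 + (g x)\<^sup>2)"
    using assms(3,4) by simp
  show "AE x in M. norm (f x * g x) \<le> norm ((f x)\<^sup>2 + (g x)\<^sup>2)"
  proof (rule AE_I2)
    fix x
    have "2 * \<bar>f x * g x\<bar> \<le> (f x)\<^sup>2 + (g x)\<^sup>2"
      using sum_squares_bound[of "\<bar>f x\<bar>" "\<bar>g x\<bar>"] by (simp add: abs_mult mult.assoc)
    then show "norm (f x * g x) \<le> norm ((f x)\<^sup>2 + (g x)\<^sup>2)"
      using abs_ge_zero[of "f x * g x"] by simp
  qed
qed measurable

lemma square_add_eq:
  fixes a b :: real
  shows "(a + b)\<^sup>2 = a\<^sup>2 + 2 * (a * b) + b\<^sup>2"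
  by (simp add: power2_sum)

lemma integrable_square_add:
  fixes f g :: "'a \<Rightarrow> real"
  assumes [measurable]: "f \<in> borel_measurable M" "g \<in> borel_measurable M"
    and "integrable M (\<lambda>x. (f x)\<^sup>2)" "integrable M (\<lambda>x. (g x)\<^sup>2)"
  shows "integrable M (\<lambda>x. (f x + g x)\<^sup>2)"
  using assms integrable_mult_of_integrable_squares[OF assms]
  by (simp add: square_add_eq)

lemma Cauchy_Schwarz_integral_nonneg:
  fixes f g :: "'a \<Rightarrow> real"
  assumes [measurable]: "f \<in> borel_measurable M" "g \<in> borel_measurable M"
    and f2: "integrable M (\<lambda>x. (f x)\<^sup>2)" and g2: "integrable M (\<lambda>x. (g x)\<^sup>2)"
    and nonneg: "\<And>x. 0 \<le> f x" "\<And>x. 0 \<le> g x"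
  shows "(\<integral>x. f x * g x \<partial>M) \<le> sqrt (\<integral>x. (f x)\<^sup>2 \<partial>M) * sqrt (\<integral>x. (g x)\<^sup>2 \<partial>M)"
proof -
  have fg: "integrable M (\<lambda>x. f x * g x)"
    using integrable_mult_of_integrable_squares[OF assms(1-4)] .
  have "ennreal ((\<integral>x. f x * g x \<partial>M)\<^sup>2) = (\<integral>\<^sup>+x. ennreal (f x) * ennreal (g x) \<partial>M)\<^sup>2"
    using fg nonneg
    by (simp add: nn_integral_eq_integral ennreal_power integral_nonneg_AE flip: ennreal_mult)
  also have "\<dots> \<le> (\<integral>\<^sup>+x. ennreal (f x) ^ 2 \<partial>M) * (\<integral>\<^sup>+x. ennreal (g x) ^ 2 \<partial>M)"
    by (rule Cauchy_Schwarz_nn_integral) measurable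
  also have "\<dots> = ennreal ((\<integral>x. (f x)\<^sup>2 \<partial>M) * (\<integral>x. (g x)\<^sup>2 \<partial>M))"
    using f2 g2 nonneg
    by (simp add: nn_integral_eq_integral ennreal_power integral_nonneg_AE ennreal_mult)
  finally have "(\<integral>x. f x * g x \<partial>M)\<^sup>2 \<le> (\<integral>x. (f x)\<^sup>2 \<partial>M) * (\<integral>x. (g x)\<^sup>2 \<partial>M)"
    by (simp add: integral_nonneg_AE)
  then show ?thesis
    by (simp add: real_le_rsqrt real_sqrt_mult[symmetric])
qed

lemma Minkowski_integral_square_nonneg:
  fixes f g :: "'a \<Rightarrow> real"
  assumes [measurable]: "f \<in> borel_measurable M" "g \<in> borel_measurable M"
    and f2: "integrable M (\<lambda>x. (f x)\<^sup>2)" and g2: "integrable M (\<lambda>x. (g x)\<^sup>2)"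
    and nonneg: "\<And>x. 0 \<le> f x" "\<And>x. 0 \<le> g x"
  shows "sqrt (\<integral>x. (f x + g x)\<^sup>2 \<partial>M) \<le> sqrt (\<integral>x. (f x)\<^sup>2 \<partial>M) + sqrt (\<integral>x. (g x)\<^sup>2 \<partial>M)"
proof (rule real_le_lsqrt)
  have fg: "integrable M (\<lambda>x. f x * g x)"
    using integrable_mult_of_integrable_squares[OF assms(1-4)] .
  have "(\<integral>x. (f x + g x)\<^sup>2 \<partial>M)
      = (\<integral>x. (f x)\<^sup>2 \<partial>M) + 2 * (\<integral>x. f x * g x \<partial>M) + (\<integral>x. (g x)\<^sup>2 \<partial>M)"
    using f2 g2 fg by (simp add: square_add_eq)
  also have "\<dots> \<le> (\<integral>x. (f x)\<^sup>2 \<partial>M)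
      + 2 * (sqrt (\<integral>x. (f x)\<^sup>2 \<partial>M) * sqrt (\<integral>x. (g x)\<^sup>2 \<partial>M)) + (\<integral>x. (g x)\<^sup>2 \<partial>M)"
    using Cauchy_Schwarz_integral_nonneg[OF assms] by simp
  also have "\<dots> = (sqrt (\<integral>x. (f x)\<^sup>2 \<partial>M) + sqrt (\<integral>x. (g x)\<^sup>2 \<partial>M))\<^sup>2"
    by (simp add: power2_sum integral_nonneg_AE)
  finally show "(\<integral>x. (f x + g x)\<^sup>2 \<partial>M)
      \<le> (sqrt (\<integral>x. (f x)\<^sup>2 \<partial>M) + sqrt (\<integral>x. (g x)\<^sup>2 \<partial>M))\<^sup>2" .
qed (simp add: integral_nonneg_AE)

lemma integrable_lborel_prod:
  fixes f :: "'a::euclidean_space \<Rightarrow> real \<Rightarrow> real"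
  assumes int: "\<And>b. b \<in> Basis \<Longrightarrow> integrable lborel (f b)"
    and nonneg: "\<And>b t. b \<in> Basis \<Longrightarrow> 0 \<le> f b t"
  shows "integrable lborel (\<lambda>x::'a. \<Prod>b\<in>Basis. f b (x \<bullet> b))"
proof (rule integrableI_bounded)
  have [measurable]: "b \<in> Basis \<Longrightarrow> f b \<in> borel_measurable borel" for b
    using int by auto
  show "(\<lambda>x::'a. \<Prod>b\<in>Basis. f b (x \<bullet> b)) \<in> borel_measurable lborel"
    by measurable
  have "(\<integral>\<^sup>+x. ennreal (norm (\<Prod>b\<in>Basis. f b (x \<bullet> b))) \<partial>lborel)
      = (\<integral>\<^sup>+x. (\<Prod>b\<in>Basis. ennreal (f b (x \<bullet> b))) \<partial>lborel)"
    by (intro nn_integral_cong) (simp add: nonneg prod_nonneg prod_ennreal)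
  also have "\<dots> = (\<Prod>b\<in>Basis. \<integral>\<^sup>+t. ennreal (f b t) \<partial>lborel)"
    by (rule nn_integral_lborel_prod) auto
  also have "\<dots> < \<infinity>"
    using int nonneg by (simp add: less_top[symmetric] ennreal_prod_eq_top integrable_iff_bounded)
  finally show "(\<integral>\<^sup>+x. ennreal (norm (\<Prod>b\<in>Basis. f b (x \<bullet> b))) \<partial>lborel) < \<infinity>" .
qed

lemma sets_std_gaussian [simp, measurable_cong]: "sets std_gaussian = sets borel"
  by (simp add: std_gaussian_def)

lemma space_std_gaussian [simp]: "space std_gaussian = UNIV"
  by (simp add: std_gaussian_def)

lemma norm_square_eq_sum_inner_Basis:
  fixes x :: "'a::euclidean_space"
  shows "(norm x)\<^sup>2 = (\<Sum>b\<in>Basis. (x \<bullet> b)\<^sup>2)"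
  by (simp only: power2_norm_eq_inner euclidean_inner[of x x] power2_eq_square[symmetric])

lemma std_gaussian_density_eq_prod:
  fixes x :: "'a::euclidean_space"
  shows "(2 * pi) powr (- real DIM('a) / 2) * exp (- (norm x)\<^sup>2 / 2)
    = (\<Prod>b\<in>Basis. std_normal_density (x \<bullet> b))"
proof -
  have "(2 * pi) powr (- real DIM('a) / 2) = ((2 * pi) powr (- 1 / 2)) ^ DIM('a)"
    by (simp add: powr_realpow[symmetric] powr_powr)
  also have "(2 * pi) powr (- 1 / 2) = 1 / sqrt (2 * pi)"
    by (simp add: powr_half_sqrt[symmetric] powr_minus_divide)
  moreover have "exp (- (norm x)\<^sup>2 / 2) = (\<Prod>b\<in>Basis. exp (- (x \<bullet> b)\<^sup>2 / 2))"
    by (simp add: norm_square_eq_sum_inner_Basis exp_sum[symmetric] sum_negf sum_divide_distrib)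
  ultimately show ?thesis
    by (simp add: std_normal_density_def prod_dividef power_one_over)
qed

lemma std_gaussian_eq_density_prod:
  "std_gaussian = density lborel (\<lambda>x::'a::euclidean_space. \<Prod>b\<in>Basis. std_normal_density (x \<bullet> b))"
  unfolding std_gaussian_def std_gaussian_density_eq_prod ..

lemma integrable_std_gaussian_abs_coordinate_power:
  fixes c :: "'a::euclidean_space"
  assumes "c \<in> Basis"
  shows "integrable std_gaussian (\<lambda>x. \<bar>x \<bullet> c\<bar> ^ k)"
proof -
  define F where "F b = (\<lambda>t. std_normal_density t * (if b = c then \<bar>t\<bar> ^ k else 1))" for b
  have "(\<Prod>b\<in>Basis. std_normal_density (x \<bullet> b)) * \<bar>x \<bullet> c\<bar> ^ k
      = (\<Prod>b\<in>Basis. F b (x \<bullet> b))" for x :: 'a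
    using assms by (simp add: F_def prod.distrib)
  moreover have "integrable lborel (\<lambda>x::'a. \<Prod>b\<in>Basis. F b (x \<bullet> b))"
  proof (rule integrable_lborel_prod)
    show "integrable lborel (F b)" for b
      using integrable_std_normal_moment_abs[of 0] integrable_std_normal_moment_abs[of k]
      by (cases "b = c") (simp_all add: F_def)
  qed (simp add: F_def)
  ultimately show ?thesis
    unfolding std_gaussian_eq_density_prod
    by (subst integrable_density) (auto simp: prod_nonneg)
qed

lemma integrable_std_gaussian_norm_square:
  "integrable std_gaussian (\<lambda>x::'a::euclidean_space. (norm x)\<^sup>2)"
proof -
  have "integrable std_gaussian (\<lambda>x::'a. \<Sum>b\<in>Basis. \<bar>x \<bullet> b\<bar> ^ 2)"
    by (intro Bochner_Integration.integrable_sum integrable_std_gaussian_abs_coordinate_power)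
  then show ?thesis
    by (simp add: norm_square_eq_sum_inner_Basis)
qed

lemma integrable_std_gaussian_inner_square:
  "integrable std_gaussian (\<lambda>x::'a::euclidean_space. (v \<bullet> x)\<^sup>2)"
proof (rule Bochner_Integration.integrable_bound)
  show "integrable std_gaussian (\<lambda>x::'a. (norm v)\<^sup>2 * (norm x)\<^sup>2)"
    by (intro integrable_mult_right integrable_std_gaussian_norm_square)
  show "(\<lambda>x. (v \<bullet> x)\<^sup>2) \<in> borel_measurable std_gaussian"
    by measurable
  show "AE x in std_gaussian. norm ((v \<bullet> x)\<^sup>2) \<le> norm ((norm v)\<^sup>2 * (norm x)\<^sup>2)"
  proof (rule AE_I2)
    fix x
    have "\<bar>v \<bullet> x\<bar> \<le> \<bar>norm v * norm x\<bar>"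
      using Cauchy_Schwarz_ineq2 by simp
    then have "(v \<bullet> x)\<^sup>2 \<le> (norm v * norm x)\<^sup>2"
      by (simp only: abs_le_square_iff)
    then show "norm ((v \<bullet> x)\<^sup>2) \<le> norm ((norm v)\<^sup>2 * (norm x)\<^sup>2)"
      by (simp add: power_mult_distrib)
  qed
qed

lemma integral_std_gaussian_pos:
  fixes f :: "'a::euclidean_space \<Rightarrow> real"
  assumes "continuous_on UNIV f" "\<And>x. 0 \<le> f x" "f z \<noteq> 0" "integrable std_gaussian f"
  shows "0 < integral\<^sup>L std_gaussian f"
proof (rule ccontr)
  assume "\<not> ?thesis"
  moreover have "0 \<le> integral\<^sup>L std_gaussian f"
    using assms(2) by (simp add: integral_nonneg_AE)
  ultimately have "integral\<^sup>L std_gaussian f = 0"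
    by simp
  then have "AE x in std_gaussian. f x = 0"
    using integral_nonneg_eq_0_iff_AE[OF assms(4)] assms(2) by simp
  then have "AE x in lborel. f x = 0"
    unfolding std_gaussian_eq_density_prod
    by (subst (asm) AE_density) (auto simp: normal_density_pos prod_pos)
  moreover have [measurable]: "f \<in> borel_measurable borel"
    using assms(1) by (rule borel_measurable_continuous_onI)
  moreover have "{x \<in> space lborel. f x \<noteq> 0} \<in> sets lborel"
    by measurable
  ultimately have "{x. f x \<noteq> 0} \<in> null_sets lborel"
    using AE_iff_null[of lborel "\<lambda>x. f x = 0"] by simp
  then have "negligible {x. f x \<noteq> 0}"
    by (simp add: negligible_iff_null_sets null_sets_completionI)
  moreover have "open {x. f x \<noteq> 0}"
    using assms(1) by (simp add: open_Collect_neq)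
  ultimately show False
    using open_not_negligible assms(3) by blast
qed

lemma support_fun_convex_hull_finite:
  fixes S :: "'a::euclidean_space set"
  assumes "finite S" "S \<noteq> {}"
  shows "support_fun (convex hull S) x = Max ((\<lambda>y. y \<bullet> x) ` S)"
  unfolding support_fun_def
proof (rule cSup_eq_maximum)
  let ?M = "Max ((\<lambda>y. y \<bullet> x) ` S)"
  have "convex {y. y \<bullet> x \<le> ?M}"
    using convex_halfspace_le[of x ?M] by (simp add: inner_commute)
  then have "convex hull S \<subseteq> {y. y \<bullet> x \<le> ?M}"
    using assms by (intro hull_minimal) auto
  then show "z \<le> ?M" if "z \<in> (\<lambda>y. y \<bullet> x) ` (convex hull S)" for z
    using that by blast
  have "?M \<in> (\<lambda>y. y \<bullet> x) ` S"
    using assms by (intro Max_in) auto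
  then obtain y where "y \<in> S" "y \<bullet> x = ?M"
    by auto
  then show "?M \<in> (\<lambda>y. y \<bullet> x) ` (convex hull S)"
    by (metis hull_inc image_eqI)
qed

lemma mdiff_eq_image: "mdiff A B = (\<lambda>(a, b). a - b) ` (A \<times> B)"
  unfolding mdiff_def by auto

lemma finite_mdiff [simp]: "finite A \<Longrightarrow> finite B \<Longrightarrow> finite (mdiff A B)"
  by (simp add: mdiff_eq_image)

lemma mdiff_eq_empty_iff [simp]: "mdiff A B = {} \<longleftrightarrow> A = {} \<or> B = {}"
  by (simp add: mdiff_eq_image)

definition width :: "'a::euclidean_space set \<Rightarrow> 'a \<Rightarrow> real" where
  "width A x = Max ((\<lambda>y. y \<bullet> x) ` mdiff A A)"

lemma gauss_delta_eq_width:
  assumes "finite A" "A \<noteq> {}"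
  shows "gauss_delta A = sqrt (\<integral>x. (width A x)\<^sup>2 \<partial>std_gaussian)"
  using assms
  by (simp add: gauss_delta_def gauss_ip_def support_fun_convex_hull_finite width_def
      power2_eq_square)

lemma width_le_iff:
  assumes "finite A" "A \<noteq> {}"
  shows "width A x \<le> t \<longleftrightarrow> (\<forall>a\<in>A. \<forall>b\<in>A. (a - b) \<bullet> x \<le> t)"
  using assms by (simp add: width_def mdiff_eq_image)

lemma inner_le_width:
  assumes "finite A" "a \<in> A" "b \<in> A"
  shows "(a - b) \<bullet> x \<le> width A x"
proof -
  have "a - b \<in> mdiff A A"
    using assms unfolding mdiff_def by blast
  then show ?thesis
    using assms unfolding width_def by (intro Max_ge) auto
qed

lemma width_nonneg:
  assumes "finite A" "A \<noteq> {}"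
  shows "0 \<le> width A x"
proof -
  obtain a where "a \<in> A"
    using assms(2) by blast
  then show ?thesis
    using inner_le_width[OF assms(1), of a a x] by simp
qed

lemma width_singleton [simp]: "width {a} x = 0"
  by (simp add: width_def mdiff_def)

lemma width_union_le:
  assumes "finite A" "finite B" "finite C" "B \<noteq> {}" "A \<union> C \<noteq> {}"
  shows "width (A \<union> C) x \<le> width (A \<union> B) x + width (B \<union> C) x"
proof -
  obtain b where b: "b \<in> B"
    using assms(4) by blast
  let ?wAB = "width (A \<union> B) x" and ?wBC = "width (B \<union> C) x"
  have AB: "(p - q) \<bullet> x \<le> ?wAB" if "p \<in> A \<union> B" "q \<in> A \<union> B" for p q
    using assms that by (intro inner_le_width) auto
  have BC: "(p - q) \<bullet> x \<le> ?wBC" if "p \<in> B \<union> C" "q \<in> B \<union> C" for p q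
    using assms that by (intro inner_le_width) auto
  have "0 \<le> ?wAB" "0 \<le> ?wBC"
    using assms b by (auto intro!: width_nonneg)
  have "(p - q) \<bullet> x \<le> ?wAB + ?wBC" if pq: "p \<in> A \<union> C" "q \<in> A \<union> C" for p q
  proof -
    have split: "(p - q) \<bullet> x = (p - b) \<bullet> x + (b - q) \<bullet> x"
      by (simp add: inner_diff_left)
    consider "p \<in> A" "q \<in> A" | "p \<in> C" "q \<in> C" | "p \<in> A" "q \<in> C" | "p \<in> C" "q \<in> A"
      using pq by blast
    then show ?thesis
    proof cases
      case 1
      then show ?thesis using AB[of p q] \<open>0 \<le> ?wBC\<close> by simp
    next
      case 2
      then show ?thesis using BC[of p q] \<open>0 \<le> ?wAB\<close> by simp
    next
      case 3
      then show ?thesis using AB[of p b] BC[of b q] b split by simp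
    next
      case 4
      then show ?thesis using BC[of p b] AB[of b q] b split by simp
    qed
  qed
  then show ?thesis
    using assms by (simp add: width_le_iff)
qed

lemma borel_measurable_width:
  assumes "finite A"
  shows "width A \<in> borel_measurable borel"
  unfolding width_def[abs_def] using assms by (intro borel_measurable_Max finite_mdiff) auto

lemma integrable_width_square:
  assumes "finite A" "A \<noteq> {}"
  shows "integrable std_gaussian (\<lambda>x. (width A x)\<^sup>2)"
proof (rule Bochner_Integration.integrable_bound)
  show "integrable std_gaussian (\<lambda>x. \<Sum>y\<in>mdiff A A. (y \<bullet> x)\<^sup>2)"
    by (intro Bochner_Integration.integrable_sum integrable_std_gaussian_inner_square)
  have [measurable]: "width A \<in> borel_measurable borel"
    using assms(1) by (rule borel_measurable_width)
  show "(\<lambda>x. (width A x)\<^sup>2) \<in> borel_measurable std_gaussian"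
    by measurable
  show "AE x in std_gaussian. norm ((width A x)\<^sup>2) \<le> norm (\<Sum>y\<in>mdiff A A. (y \<bullet> x)\<^sup>2)"
  proof (rule AE_I2)
    fix x
    have "width A x \<in> (\<lambda>y. y \<bullet> x) ` mdiff A A"
      unfolding width_def using assms by (intro Max_in) auto
    then obtain y where "y \<in> mdiff A A" "width A x = y \<bullet> x"
      by blast
    moreover have "(y \<bullet> x)\<^sup>2 \<le> (\<Sum>y\<in>mdiff A A. (y \<bullet> x)\<^sup>2)"
      using \<open>y \<in> mdiff A A\<close> assms(1) by (intro member_le_sum) simp_all
    ultimately have "(width A x)\<^sup>2 \<le> (\<Sum>y\<in>mdiff A A. (y \<bullet> x)\<^sup>2)"
      by simp
    then show "norm ((width A x)\<^sup>2) \<le> norm (\<Sum>y\<in>mdiff A A. (y \<bullet> x)\<^sup>2)"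
      by (simp add: sum_nonneg)
  qed
qed

lemma gauss_delta_nonneg: "0 \<le> gauss_delta A"
  by (simp add: gauss_delta_def gauss_ip_def integral_nonneg_AE)

lemma gauss_delta_eq_0_iff:
  assumes "finite A"
  shows "gauss_delta A = 0 \<longleftrightarrow> card A \<le> 1"
proof
  assume "card A \<le> 1"
  then consider "A = {}" | a where "A = {a}"
    using assms by (auto simp: card_le_Suc0_iff_eq)
  then show "gauss_delta A = 0"
    by cases (simp add: gauss_delta_def, simp add: gauss_delta_eq_width)
next
  assume "gauss_delta A = 0"
  show "card A \<le> 1"
  proof (rule ccontr)
    assume "\<not> card A \<le> 1"
    then obtain a b where ab: "a \<in> A" "b \<in> A" "a \<noteq> b"
      using assms by (auto simp: card_le_Suc0_iff_eq)
    have "continuous_on UNIV (\<lambda>x. ((a - b) \<bullet> x)\<^sup>2)"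
      by (intro continuous_intros)
    then have "0 < (\<integral>x. ((a - b) \<bullet> x)\<^sup>2 \<partial>std_gaussian)"
      using ab(3)
      by (intro integral_std_gaussian_pos[where z = "a - b"] integrable_std_gaussian_inner_square)
        auto
    also have "\<dots> \<le> (\<integral>x. (width A x)\<^sup>2 \<partial>std_gaussian)"
    proof (rule integral_mono')
      show "integrable std_gaussian (\<lambda>x. (width A x)\<^sup>2)"
        using assms ab by (intro integrable_width_square) auto
      fix x
      have "(a - b) \<bullet> x \<le> width A x" "- ((a - b) \<bullet> x) \<le> width A x"
        using inner_le_width[OF assms ab(1,2)] inner_le_width[OF assms ab(2,1)]
        by (simp_all add: inner_diff_left)
      then show "((a - b) \<bullet> x)\<^sup>2 \<le> (width A x)\<^sup>2"
        by (simp add: abs_le_square_iff[symmetric])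
    qed simp
    finally have "0 < gauss_delta A"
      using assms ab(1) by (subst gauss_delta_eq_width) auto
    with \<open>gauss_delta A = 0\<close> show False
      by simp
  qed
qed

lemma gauss_delta_union_le:
  assumes "finite A" "finite B" "finite C" "B \<noteq> {}"
  shows "gauss_delta (A \<union> C) \<le> gauss_delta (A \<union> B) + gauss_delta (B \<union> C)"
proof (cases "A \<union> C = {}")
  case True
  then show ?thesis
    using gauss_delta_nonneg[of "A \<union> B"] gauss_delta_nonneg[of "B \<union> C"]
    by (simp add: gauss_delta_def)
next
  case False
  let ?f = "width (A \<union> B)" and ?g = "width (B \<union> C)"
  have [measurable]: "?f \<in> borel_measurable borel" "?g \<in> borel_measurable borel"
    using assms by (simp_all add: borel_measurable_width)
  have f: "?f \<in> borel_measurable std_gaussian" and g: "?g \<in> borel_measurable std_gaussian"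
    by measurable measurable
  have f2: "integrable std_gaussian (\<lambda>x. (?f x)\<^sup>2)" and g2: "integrable std_gaussian (\<lambda>x. (?g x)\<^sup>2)"
    using assms by (simp_all add: integrable_width_square)
  have nonneg: "0 \<le> ?f x" "0 \<le> ?g x" for x
    using assms by (simp_all add: width_nonneg)
  have "(\<integral>x. (width (A \<union> C) x)\<^sup>2 \<partial>std_gaussian) \<le> (\<integral>x. (?f x + ?g x)\<^sup>2 \<partial>std_gaussian)"
  proof (rule integral_mono')
    show "integrable std_gaussian (\<lambda>x. (?f x + ?g x)\<^sup>2)"
      using f g f2 g2 by (rule integrable_square_add)
    show "(width (A \<union> C) x)\<^sup>2 \<le> (?f x + ?g x)\<^sup>2" for x
      using assms False by (intro power_mono width_union_le width_nonneg) auto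
  qed simp
  then have "gauss_delta (A \<union> C) \<le> sqrt (\<integral>x. (?f x + ?g x)\<^sup>2 \<partial>std_gaussian)"
    using assms False by (simp add: gauss_delta_eq_width)
  also have "\<dots> \<le> gauss_delta (A \<union> B) + gauss_delta (B \<union> C)"
    using Minkowski_integral_square_nonneg[OF f g f2 g2 nonneg] assms
    by (simp add: gauss_delta_eq_width)
  finally show ?thesis .
qed

theorem proposition7:
  shows "is_diversity (UNIV :: 'a::euclidean_space set) gauss_delta"
  unfolding is_diversity_def
  by (simp add: gauss_delta_nonneg gauss_delta_eq_0_iff gauss_delta_union_le)

end
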